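(* Let $\Theta$ and $\varphi$ be inner functions such that $\varphi$ divides $\Theta$ (i.e. $I:=\Theta/\varphi$ is inner). Then every unit vector belonging to $\{vg : g\in\mathcal{K}_\varphi,\ v \text{ an inner divisor of } I\}$ is $\varphi(S_\Theta)$-inner, i.e. satisfies $\langle \varphi(S_\Theta)^n h, h\rangle = 0$ for all $n\ge1$.
   Context: $H^2$ is the Hardy space on the unit disk with inner product $\langle f,g\rangle=\int_{\mathbb{T}} f\overline{g}\,dm$. For an inner function $\Theta$, the model space is $\mathcal{K}_\Theta=(\Theta H^2)^\perp$ and $P_\Theta$ is the orthogonal projection of $L^2(\mathbb{T},m)$ onto $\mathcal{K}_\Theta$. The compressed shift is $S_\Theta:\mathcal{K}_\Theta\to\mathcal{K}_\Theta$, $S_\Theta f=P_\Theta(zf)$, and for $\varphi\in H^\infty$ the functional calculus gives $\varphi(S_\Theta)=P_\Theta T_\varphi|_{\mathcal{K}_\Theta}$, where $T_\varphi f=\varphi f$. An inner function $v$ is an inner divisor of an inner function $I$ if $I/v$ is inner. *)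

theory Defs
  imports "HOL-Complex_Analysis.Complex_Analysis"
begin

definition taylor_coeff :: "(complex \<Rightarrow> complex) \<Rightarrow> nat \<Rightarrow> complex" where
  "taylor_coeff f n = (deriv ^^ n) f 0 / of_nat (fact n)"

text \<open>Hardy space H^2: holomorphic functions on the open unit disc with square-summable
  Taylor coefficients; values outside the disc are normalised to 0 so that elements
  are uniquely determined.\<close>
definition H2 :: "(complex \<Rightarrow> complex) set" where
  "H2 = {f. f holomorphic_on ball 0 1 \<and> (\<forall>z. z \<notin> ball 0 1 \<longrightarrow> f z = 0) \<and>
            summable (\<lambda>n. (norm (taylor_coeff f n))\<^sup>2)}"

text \<open>The H^2 inner product (equals the integral of f * conj g over the circle w.r.t.
  normalised Lebesgue measure, by Parseval).\<close>
definition h2_inner :: "(complex \<Rightarrow> complex) \<Rightarrow> (complex \<Rightarrow> complex) \<Rightarrow> complex" where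
  "h2_inner f g = (\<Sum>n. taylor_coeff f n * cnj (taylor_coeff g n))"

definition inner_fun :: "(complex \<Rightarrow> complex) \<Rightarrow> bool" where
  "inner_fun u \<longleftrightarrow> u holomorphic_on ball 0 1 \<and> bounded (u ` ball 0 1) \<and>
     (AE t in lebesgue_on {0..2*pi}. \<exists>L. ((\<lambda>r. u (complex_of_real r * cis t)) \<longlongrightarrow> L) (at_left 1)
                                        \<and> norm L = 1)"

definition inner_divisor :: "(complex \<Rightarrow> complex) \<Rightarrow> (complex \<Rightarrow> complex) \<Rightarrow> bool" where
  "inner_divisor v I \<longleftrightarrow> inner_fun v \<and> inner_fun I \<and>
     (\<exists>u. inner_fun u \<and> (\<forall>z\<in>ball 0 1. I z = v z * u z))"

definition model_space :: "(complex \<Rightarrow> complex) \<Rightarrow> (complex \<Rightarrow> complex) set" where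
  "model_space \<Theta> = {f \<in> H2. \<forall>k\<in>H2. h2_inner f (\<lambda>z. \<Theta> z * k z) = 0}"

definition model_proj :: "(complex \<Rightarrow> complex) \<Rightarrow> (complex \<Rightarrow> complex) \<Rightarrow> (complex \<Rightarrow> complex)" where
  "model_proj \<Theta> f = (THE g. g \<in> model_space \<Theta> \<and>
                            (\<forall>k\<in>model_space \<Theta>. h2_inner (\<lambda>z. f z - g z) k = 0))"

text \<open>phi(S_Theta) = P_Theta T_phi restricted to K_Theta.\<close>
definition compressed_op :: "(complex \<Rightarrow> complex) \<Rightarrow> (complex \<Rightarrow> complex) \<Rightarrow>
     (complex \<Rightarrow> complex) \<Rightarrow> (complex \<Rightarrow> complex)" where
  "compressed_op \<Theta> \<phi> h = model_proj \<Theta> (\<lambda>z. \<phi> z * h z)"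

end

theory Submission
  imports Defs
begin

(* Multiplication by an inner function v is an isometry of H^2: Parseval's identity on the
   circles of radius r < 1 together with the unimodular radial limits of v gives
   <v p, v q> = <p, q> for polynomials, and polynomials are dense. Hence if g is in K_phi and
   I = v u, then v g is orthogonal to Theta H^2 = v (phi u H^2), i.e. v K_phi is contained in
   K_Theta. Since P_Theta f differs from f by an element of Theta H^2, induction gives
   phi(S_Theta)^n h = phi^n h + Theta w, so for h = v g in K_Theta
   <phi(S_Theta)^n h, h> = <phi^n h, h> = <phi^n g, g>, which vanishes for n >= 1 because g is
   orthogonal to phi H^2. *)

section \<open>Square-summable sequences\<close>

definition square_summable :: "(nat \<Rightarrow> complex) \<Rightarrow> bool" where
  "square_summable a \<longleftrightarrow> summable (\<lambda>n. (norm (a n))\<^sup>2)"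

definition seq_norm_sq :: "(nat \<Rightarrow> complex) \<Rightarrow> real" where
  "seq_norm_sq a = (\<Sum>n. (norm (a n))\<^sup>2)"

definition seq_inner :: "(nat \<Rightarrow> complex) \<Rightarrow> (nat \<Rightarrow> complex) \<Rightarrow> complex" where
  "seq_inner a b = (\<Sum>n. a n * cnj (b n))"

lemma summable_norm_mult_square_summable:
  assumes "square_summable a" "square_summable b"
  shows "summable (\<lambda>n. norm (a n) * norm (b n))"
proof (rule summable_comparison_test')
  show "summable (\<lambda>n. ((norm (a n))\<^sup>2 + (norm (b n))\<^sup>2) / 2)"
    using assms unfolding square_summable_def by (intro summable_divide summable_add)
  show "norm (norm (a n) * norm (b n)) \<le> ((norm (a n))\<^sup>2 + (norm (b n))\<^sup>2) / 2" for n
    using sum_squares_bound[of "norm (a n)" "norm (b n)"] by simp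
qed

lemma summable_norm_seq_inner:
  assumes "square_summable a" "square_summable b"
  shows "summable (\<lambda>n. norm (a n * cnj (b n)))"
  using summable_norm_mult_square_summable[OF assms] by (simp add: norm_mult)

lemma summable_seq_inner:
  assumes "square_summable a" "square_summable b"
  shows "summable (\<lambda>n. a n * cnj (b n))"
  by (rule summable_norm_cancel[OF summable_norm_seq_inner[OF assms]])

lemma square_summable_0: "square_summable (\<lambda>n. 0)"
  unfolding square_summable_def by simp

lemma square_summable_add:
  assumes "square_summable a" "square_summable b"
  shows "square_summable (\<lambda>n. a n + b n)"
  unfolding square_summable_def
proof (rule summable_comparison_test')
  show "summable (\<lambda>n. 2 * (norm (a n))\<^sup>2 + 2 * (norm (b n))\<^sup>2)"
    using assms unfolding square_summable_def by (intro summable_add summable_mult)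
  fix n
  have "(norm (a n + b n))\<^sup>2 \<le> (norm (a n) + norm (b n))\<^sup>2"
    by (intro power_mono norm_triangle_ineq) auto
  also have "\<dots> \<le> 2 * (norm (a n))\<^sup>2 + 2 * (norm (b n))\<^sup>2"
    using sum_squares_bound[of "norm (a n)" "norm (b n)"] by (simp add: power2_sum)
  finally show "norm ((norm (a n + b n))\<^sup>2) \<le> 2 * (norm (a n))\<^sup>2 + 2 * (norm (b n))\<^sup>2"
    by simp
qed

lemma square_summable_cmult:
  "square_summable a \<Longrightarrow> square_summable (\<lambda>n. c * a n)"
  unfolding square_summable_def by (simp add: norm_mult power_mult_distrib summable_mult)

lemma square_summable_diff:
  assumes "square_summable a" "square_summable b"
  shows "square_summable (\<lambda>n. a n - b n)"
  using square_summable_add[OF assms(1) square_summable_cmult[OF assms(2), of "-1"]] by simp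

lemma square_summable_sum:
  "(\<And>i. i \<in> S \<Longrightarrow> square_summable (A i)) \<Longrightarrow> square_summable (\<lambda>n. \<Sum>i\<in>S. A i n)"
  by (induction S rule: infinite_finite_induct)
    (auto simp: square_summable_0 intro: square_summable_add)

lemma square_summable_finite_support:
  "(\<And>n. n \<ge> N \<Longrightarrow> a n = 0) \<Longrightarrow> square_summable a"
  unfolding square_summable_def by (rule summable_finite[of "{..<N}"]) auto

lemma seq_inner_add_left:
  assumes "square_summable a" "square_summable b" "square_summable c"
  shows "seq_inner (\<lambda>n. a n + b n) c = seq_inner a c + seq_inner b c"
  unfolding seq_inner_def
  using suminf_add[OF summable_seq_inner[OF assms(1,3)] summable_seq_inner[OF assms(2,3)]]
  by (simp add: distrib_right)

lemma seq_inner_diff_left: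
  assumes "square_summable a" "square_summable b" "square_summable c"
  shows "seq_inner (\<lambda>n. a n - b n) c = seq_inner a c - seq_inner b c"
  unfolding seq_inner_def
  using suminf_diff[OF summable_seq_inner[OF assms(1,3)] summable_seq_inner[OF assms(2,3)]]
  by (simp add: left_diff_distrib)

lemma seq_inner_cmult_left:
  assumes "square_summable a" "square_summable b"
  shows "seq_inner (\<lambda>n. c * a n) b = c * seq_inner a b"
  unfolding seq_inner_def using suminf_mult[OF summable_seq_inner[OF assms], of c]
  by (simp add: mult.assoc)

lemma seq_inner_sum_left:
  assumes "finite S" "\<And>i. i \<in> S \<Longrightarrow> square_summable (A i)" "square_summable b"
  shows "seq_inner (\<lambda>n. \<Sum>i\<in>S. A i n) b = (\<Sum>i\<in>S. seq_inner (A i) b)"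
  using assms
proof (induction S rule: finite_induct)
  case empty
  then show ?case by (simp add: seq_inner_def)
next
  case (insert x F)
  then show ?case
    by (simp add: seq_inner_add_left square_summable_sum)
qed

lemma seq_inner_commute:
  assumes "square_summable a" "square_summable b"
  shows "seq_inner b a = cnj (seq_inner a b)"
proof -
  have "(\<lambda>n. cnj (a n * cnj (b n))) sums cnj (seq_inner a b)"
    using summable_sums[OF summable_seq_inner[OF assms]] unfolding seq_inner_def sums_cnj .
  then show ?thesis
    unfolding seq_inner_def by (simp add: mult.commute sums_iff)
qed


lemma seq_inner_add_right:
  assumes "square_summable a" "square_summable b" "square_summable c"
  shows "seq_inner c (\<lambda>n. a n + b n) = seq_inner c a + seq_inner c b"
  using seq_inner_add_left[OF assms] seq_inner_commute[OF assms(1,3)]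
    seq_inner_commute[OF assms(2,3)]
    seq_inner_commute[OF square_summable_add[OF assms(1,2)] assms(3)]
  by simp

lemma seq_inner_diff_right:
  assumes "square_summable a" "square_summable b" "square_summable c"
  shows "seq_inner c (\<lambda>n. a n - b n) = seq_inner c a - seq_inner c b"
  using seq_inner_diff_left[OF assms] seq_inner_commute[OF assms(1,3)]
    seq_inner_commute[OF assms(2,3)]
    seq_inner_commute[OF square_summable_diff[OF assms(1,2)] assms(3)]
  by simp

lemma seq_inner_cmult_right:
  assumes "square_summable a" "square_summable b"
  shows "seq_inner b (\<lambda>n. c * a n) = cnj c * seq_inner b a"
  using seq_inner_cmult_left[OF assms, of c] seq_inner_commute[OF assms]
    seq_inner_commute[OF square_summable_cmult[OF assms(1)] assms(2)]
  by simp

lemma seq_inner_sum_right: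
  assumes "finite S" "\<And>i. i \<in> S \<Longrightarrow> square_summable (A i)" "square_summable b"
  shows "seq_inner b (\<lambda>n. \<Sum>i\<in>S. A i n) = (\<Sum>i\<in>S. seq_inner b (A i))"
proof -
  have "seq_inner b (\<lambda>n. \<Sum>i\<in>S. A i n) = cnj (\<Sum>i\<in>S. seq_inner (A i) b)"
    using assms seq_inner_commute[of b "\<lambda>n. \<Sum>i\<in>S. A i n"]
    by (simp add: seq_inner_sum_left square_summable_sum)
  also have "\<dots> = (\<Sum>i\<in>S. seq_inner b (A i))"
    unfolding cnj_sum using assms by (intro sum.cong refl) (metis seq_inner_commute complex_cnj_cnj)
  finally show ?thesis .
qed

lemma seq_inner_self: "square_summable a \<Longrightarrow> seq_inner a a = of_real (seq_norm_sq a)"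
  unfolding seq_inner_def seq_norm_sq_def square_summable_def
  by (simp only: complex_norm_square[symmetric] suminf_of_real)

lemma seq_norm_sq_nonneg: "square_summable a \<Longrightarrow> seq_norm_sq a \<ge> 0"
  unfolding seq_norm_sq_def square_summable_def by (intro suminf_nonneg) auto

lemma seq_norm_sq_eq_0_iff:
  "square_summable a \<Longrightarrow> seq_norm_sq a = 0 \<longleftrightarrow> a = (\<lambda>n. 0)"
  unfolding seq_norm_sq_def square_summable_def
  by (subst suminf_eq_zero_iff) (auto simp: fun_eq_iff)

lemma seq_inner_Cauchy_Schwarz:
  assumes "square_summable a" "square_summable b"
  shows "norm (seq_inner a b) \<le> sqrt (seq_norm_sq a) * sqrt (seq_norm_sq b)"
proof -
  have partial_sums: "(\<Sum>n<N. norm (a n) * norm (b n)) \<le> sqrt (seq_norm_sq a) * sqrt (seq_norm_sq b)"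
    for N
  proof -
    have "(\<Sum>n<N. norm (a n) * norm (b n))
        \<le> L2_set (\<lambda>n. norm (a n)) {..<N} * L2_set (\<lambda>n. norm (b n)) {..<N}"
      using L2_set_mult_ineq[of "\<lambda>n. norm (a n)" "\<lambda>n. norm (b n)" "{..<N}"] by simp
    also have "\<dots> \<le> sqrt (seq_norm_sq a) * sqrt (seq_norm_sq b)"
      using assms unfolding L2_set_def seq_norm_sq_def square_summable_def
      by (intro mult_mono real_sqrt_le_mono sum_le_suminf real_sqrt_ge_zero suminf_nonneg
          sum_nonneg) auto
    finally show ?thesis .
  qed
  have "norm (seq_inner a b) \<le> (\<Sum>n. norm (a n) * norm (b n))"
    unfolding seq_inner_def using summable_norm[OF summable_norm_seq_inner[OF assms]]
    by (simp add: norm_mult)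
  also have "\<dots> \<le> sqrt (seq_norm_sq a) * sqrt (seq_norm_sq b)"
    by (rule suminf_le_const[OF summable_norm_mult_square_summable[OF assms] partial_sums])
  finally show ?thesis .
qed

lemma norm_seq_inner_diff_le:
  assumes x: "square_summable x" and y: "square_summable y"
    and x': "square_summable x'" and y': "square_summable y'"
  shows "norm (seq_inner x' y' - seq_inner x y)
    \<le> sqrt (seq_norm_sq (\<lambda>n. x' n - x n)) * sqrt (seq_norm_sq (\<lambda>n. y' n - y n))
      + sqrt (seq_norm_sq (\<lambda>n. x' n - x n)) * sqrt (seq_norm_sq y)
      + sqrt (seq_norm_sq x) * sqrt (seq_norm_sq (\<lambda>n. y' n - y n))"
proof -
  define dx where "dx = (\<lambda>n. x' n - x n)"
  define dy where "dy = (\<lambda>n. y' n - y n)"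
  have dx: "square_summable dx" and dy: "square_summable dy"
    unfolding dx_def dy_def using assms by (simp_all add: square_summable_diff)
  have x'_eq: "x' = (\<lambda>n. dx n + x n)" and y'_eq: "y' = (\<lambda>n. dy n + y n)"
    by (simp_all add: dx_def dy_def)
  have "seq_inner x' y' = seq_inner dx y' + seq_inner x y'"
    unfolding x'_eq by (rule seq_inner_add_left[OF dx x y'])
  also have "seq_inner dx y' = seq_inner dx dy + seq_inner dx y"
    unfolding y'_eq by (rule seq_inner_add_right[OF dy y dx])
  also have "seq_inner x y' = seq_inner x dy + seq_inner x y"
    unfolding y'_eq by (rule seq_inner_add_right[OF dy y x])
  finally have "seq_inner x' y' - seq_inner x y = seq_inner dx dy + seq_inner dx y + seq_inner x dy"
    by simp
  then have "norm (seq_inner x' y' - seq_inner x y)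
      \<le> norm (seq_inner dx dy) + norm (seq_inner dx y) + norm (seq_inner x dy)"
    by (simp only:) (rule norm_triangle_le[OF add_mono[OF norm_triangle_ineq order.refl]])
  also have "\<dots> \<le> sqrt (seq_norm_sq dx) * sqrt (seq_norm_sq dy)
      + sqrt (seq_norm_sq dx) * sqrt (seq_norm_sq y) + sqrt (seq_norm_sq x) * sqrt (seq_norm_sq dy)"
    by (intro add_mono seq_inner_Cauchy_Schwarz dx dy x y)
  finally show ?thesis unfolding dx_def dy_def .
qed

lemma tendsto_seq_inner:
  assumes "square_summable x" "square_summable y"
    and "\<And>k. square_summable (X k)" "\<And>k. square_summable (Y k)"
    and "(\<lambda>k. seq_norm_sq (\<lambda>n. X k n - x n)) \<longlonglongrightarrow> 0"
    and "(\<lambda>k. seq_norm_sq (\<lambda>n. Y k n - y n)) \<longlonglongrightarrow> 0"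
  shows "(\<lambda>k. seq_inner (X k) (Y k)) \<longlonglongrightarrow> seq_inner x y"
proof -
  define dX where "dX = (\<lambda>k. sqrt (seq_norm_sq (\<lambda>n. X k n - x n)))"
  define dY where "dY = (\<lambda>k. sqrt (seq_norm_sq (\<lambda>n. Y k n - y n)))"
  have "dX \<longlonglongrightarrow> 0" "dY \<longlonglongrightarrow> 0"
    unfolding dX_def dY_def using tendsto_real_sqrt[OF assms(5)] tendsto_real_sqrt[OF assms(6)]
    by simp_all
  then have "(\<lambda>k. dX k * dY k + dX k * sqrt (seq_norm_sq y) + sqrt (seq_norm_sq x) * dY k)
      \<longlonglongrightarrow> 0 * 0 + 0 * sqrt (seq_norm_sq y) + sqrt (seq_norm_sq x) * 0"
    by (intro tendsto_add tendsto_mult tendsto_const)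
  then have "(\<lambda>k. dX k * dY k + dX k * sqrt (seq_norm_sq y) + sqrt (seq_norm_sq x) * dY k) \<longlonglongrightarrow> 0"
    by simp
  then have "(\<lambda>k. seq_inner (X k) (Y k) - seq_inner x y) \<longlonglongrightarrow> 0"
    unfolding dX_def dY_def
    by (rule Lim_null_comparison[OF always_eventually[OF allI], rotated])
      (rule norm_seq_inner_diff_le[OF assms(1-4)])
  then show ?thesis by (rule LIM_zero_cancel)
qed
lemma seq_inner_sum_cmult_right:
  fixes E :: "nat \<Rightarrow> nat \<Rightarrow> complex"
  assumes "square_summable x" "\<And>n. square_summable (E n)"
  shows "seq_inner x (\<lambda>k. \<Sum>n<N. c n * E n k) = (\<Sum>n<N. cnj (c n) * seq_inner x (E n))"
proof -
  have "seq_inner x (\<lambda>k. \<Sum>n<N. c n * E n k) = (\<Sum>n<N. seq_inner x (\<lambda>k. c n * E n k))"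
    by (rule seq_inner_sum_right) (simp_all add: assms square_summable_cmult)
  also have "\<dots> = (\<Sum>n<N. cnj (c n) * seq_inner x (E n))"
    by (intro sum.cong refl seq_inner_cmult_right assms)
  finally show ?thesis .
qed

lemma seq_Bessel_inequality:
  fixes E :: "nat \<Rightarrow> nat \<Rightarrow> complex"
  assumes x: "square_summable x" and E: "\<And>n. square_summable (E n)"
    and orthonormal: "\<And>n m. seq_inner (E n) (E m) = (if n = m then 1 else 0)"
  shows "(\<Sum>n<N. (norm (seq_inner x (E n)))\<^sup>2) \<le> seq_norm_sq x"
proof -
  define w where "w n = seq_inner x (E n)" for n
  define s where "s = (\<lambda>k. \<Sum>n<N. w n * E n k)"
  have s: "square_summable s"
    unfolding s_def by (intro square_summable_sum square_summable_cmult E)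
  define T where "T = (\<Sum>n<N. (norm (w n))\<^sup>2)"
  have x_s: "seq_inner x s = T"
    unfolding s_def T_def seq_inner_sum_cmult_right[OF x E] of_real_sum
    by (simp add: w_def complex_norm_square[symmetric] mult.commute)
  have s_s: "seq_inner s s = T"
  proof -
    have "seq_inner s s = (\<Sum>n<N. w n * seq_inner (E n) s)"
      unfolding s_def[abs_def]
      by (simp add: seq_inner_sum_left seq_inner_cmult_left E square_summable_cmult
          s[unfolded s_def])
    also have "\<dots> = T"
      unfolding s_def seq_inner_sum_cmult_right[OF E E] orthonormal T_def of_real_sum
      by (simp add: if_distrib[of "\<lambda>c. _ * c"] complex_norm_square[symmetric] cong: if_cong)
    finally show ?thesis .
  qed
  have s_x: "seq_inner s x = T"
    using seq_inner_commute[OF x s] x_s by simp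
  define d where "d = (\<lambda>k. x k - s k)"
  have d: "square_summable d" unfolding d_def by (rule square_summable_diff[OF x s])
  have "seq_inner d d = seq_inner x d - seq_inner s d"
    unfolding d_def by (rule seq_inner_diff_left[OF x s d[unfolded d_def]])
  also have "\<dots> = seq_inner x x - T"
    unfolding d_def seq_inner_diff_right[OF x s x] seq_inner_diff_right[OF x s s] x_s s_x s_s
    by simp
  finally have "complex_of_real (seq_norm_sq d) = of_real (seq_norm_sq x - T)"
    unfolding seq_inner_self[OF d] seq_inner_self[OF x] by simp
  then have "seq_norm_sq d = seq_norm_sq x - T"
    by (simp only: of_real_eq_iff)
  then show ?thesis using seq_norm_sq_nonneg[OF d] by (simp add: T_def w_def)
qed

lemma tendsto_seq_norm_sq_truncation:
  assumes "square_summable a"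
  shows "(\<lambda>N. seq_norm_sq (\<lambda>n. (if n < N then a n else 0) - a n)) \<longlonglongrightarrow> 0"
proof -
  define x where "x n = (norm (a n))\<^sup>2" for n
  have x: "summable x" using assms unfolding square_summable_def x_def .
  have "seq_norm_sq (\<lambda>n. (if n < N then a n else 0) - a n) = suminf x - (\<Sum>n<N. x n)" for N
  proof -
    have trunc: "summable (\<lambda>n. if n < N then x n else 0)"
      by (rule summable_finite[of "{..<N}"]) auto
    have "seq_norm_sq (\<lambda>n. (if n < N then a n else 0) - a n)
        = (\<Sum>n. x n - (if n < N then x n else 0))"
      unfolding seq_norm_sq_def x_def by (intro suminf_cong) auto
    also have "\<dots> = suminf x - (\<Sum>n<N. x n)"
      by (subst suminf_diff[OF x trunc, symmetric], subst suminf_finite[of "{..<N}"]) auto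
    finally show ?thesis .
  qed
  moreover have "(\<lambda>N. suminf x - (\<Sum>n<N. x n)) \<longlonglongrightarrow> suminf x - suminf x"
    by (intro tendsto_intros summable_LIMSEQ x)
  ultimately show ?thesis by simp
qed

section \<open>Taylor coefficients and the Hardy space\<close>

abbreviation disc :: "complex set" where
  "disc \<equiv> ball 0 1"

lemma taylor_coeff_cong:
  assumes "\<And>z. z \<in> disc \<Longrightarrow> f z = g z"
  shows "taylor_coeff f n = taylor_coeff g n"
proof -
  have "eventually (\<lambda>z. f z = g z) (nhds 0)"
    using eventually_nhds_in_open[of disc 0] by (rule eventually_mono) (use assms in auto)
  then have "(deriv ^^ n) f 0 = (deriv ^^ n) g 0" by (rule higher_deriv_cong_ev) simp
  then show ?thesis unfolding taylor_coeff_def by simp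
qed

lemma taylor_coeff_0 [simp]: "taylor_coeff (\<lambda>z. 0) n = 0"
  unfolding taylor_coeff_def by simp

lemma taylor_coeff_add:
  assumes "f holomorphic_on disc" "g holomorphic_on disc"
  shows "taylor_coeff (\<lambda>z. f z + g z) n = taylor_coeff f n + taylor_coeff g n"
  unfolding taylor_coeff_def using higher_deriv_add[OF assms, of 0 n]
  by (simp add: add_divide_distrib)

lemma taylor_coeff_diff:
  assumes "f holomorphic_on disc" "g holomorphic_on disc"
  shows "taylor_coeff (\<lambda>z. f z - g z) n = taylor_coeff f n - taylor_coeff g n"
  unfolding taylor_coeff_def using higher_deriv_diff[OF assms, of 0 n]
  by (simp add: diff_divide_distrib)

lemma taylor_coeff_cmult:
  assumes "f holomorphic_on disc"
  shows "taylor_coeff (\<lambda>z. c * f z) n = c * taylor_coeff f n"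
  unfolding taylor_coeff_def using higher_deriv_cmult[OF assms, of 0 n c] by simp

lemma taylor_coeff_sum:
  assumes "\<And>i. i \<in> S \<Longrightarrow> F i holomorphic_on disc"
  shows "taylor_coeff (\<lambda>z. \<Sum>i\<in>S. F i z) n = (\<Sum>i\<in>S. taylor_coeff (F i) n)"
  using assms
proof (induction S rule: infinite_finite_induct)
  case (insert x S)
  then show ?case
    by (simp add: taylor_coeff_add holomorphic_on_sum)
qed simp_all

lemma sums_taylor_coeff:
  assumes "f holomorphic_on disc" "z \<in> disc"
  shows "(\<lambda>n. taylor_coeff f n * z ^ n) sums f z"
  using holomorphic_power_series[OF assms] unfolding taylor_coeff_def by simp

lemma taylor_coeff_eval_fps:
  "fps_conv_radius F > 0 \<Longrightarrow> taylor_coeff (eval_fps F) n = fps_nth F n"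
  unfolding taylor_coeff_def using fps_nth_conv_deriv[of F n] by simp

lemma taylor_coeff_power: "taylor_coeff (\<lambda>z. z ^ m) n = (if n = m then 1 else 0)"
proof -
  have X_power: "eval_fps (fps_X ^ m) = (\<lambda>z. z ^ m)" by (auto simp: eval_fps_X_power)
  have "taylor_coeff (\<lambda>z. z ^ m) n = fps_nth (fps_X ^ m) n"
    unfolding X_power[symmetric] by (rule taylor_coeff_eval_fps) simp
  then show ?thesis by simp
qed

definition series_trunc :: "(nat \<Rightarrow> complex) \<Rightarrow> nat \<Rightarrow> complex \<Rightarrow> complex" where
  "series_trunc a N z = (\<Sum>n<N. a n * z ^ n)"

lemma holomorphic_series_trunc [holomorphic_intros]: "series_trunc a N holomorphic_on S"
  unfolding series_trunc_def by (intro holomorphic_intros)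

lemma taylor_coeff_series_trunc:
  "taylor_coeff (series_trunc a N) n = (if n < N then a n else 0)"
proof -
  have "taylor_coeff (series_trunc a N) n = (\<Sum>m<N. taylor_coeff (\<lambda>z. a m * z ^ m) n)"
    unfolding series_trunc_def by (rule taylor_coeff_sum) (intro holomorphic_intros)
  also have "\<dots> = (\<Sum>m<N. a m * (if n = m then 1 else 0))"
    by (simp add: taylor_coeff_cmult taylor_coeff_power holomorphic_intros)
  also have "\<dots> = (if n < N then a n else 0)"
    by (simp add: if_distrib cong: if_cong)
  finally show ?thesis .
qed

lemma square_summable_taylor_coeff_series_trunc:
  "square_summable (taylor_coeff (series_trunc a N))"
  by (rule square_summable_finite_support[of N]) (simp add: taylor_coeff_series_trunc)

lemma fps_conv_radius_square_summable:
  assumes "square_summable a"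
  shows "fps_conv_radius (Abs_fps a) \<ge> 1"
  unfolding fps_conv_radius_def
proof (rule conv_radius_geI_ex')
  fix r :: real assume r: "0 < r" "ereal r < 1"
  have "(\<lambda>n. (norm (a n))\<^sup>2) \<longlonglongrightarrow> 0"
    using assms unfolding square_summable_def by (rule summable_LIMSEQ_zero)
  then have "(\<lambda>n. norm (a n)) \<longlonglongrightarrow> 0"
    using tendsto_real_sqrt by fastforce
  then have "a \<longlonglongrightarrow> 0"
    by (simp only: tendsto_norm_zero_iff)
  then obtain K where K: "\<And>n. norm (a n) \<le> K"
    using BseqE[OF convergent_imp_Bseq[OF convergentI]] by blast
  show "summable (\<lambda>n. fps_nth (Abs_fps a) n * of_real r ^ n)"
  proof (rule summable_comparison_test')
    show "summable (\<lambda>n. K * r ^ n)" using r by (intro summable_mult summable_geometric) auto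
    show "norm (fps_nth (Abs_fps a) n * of_real r ^ n) \<le> K * r ^ n" for n
      using K[of n] r by (auto simp: norm_mult norm_power intro!: mult_right_mono)
  qed
qed

definition series_fun :: "(nat \<Rightarrow> complex) \<Rightarrow> complex \<Rightarrow> complex" where
  "series_fun a z = (if z \<in> disc then eval_fps (Abs_fps a) z else 0)"

lemma
  assumes "square_summable a"
  shows holomorphic_series_fun: "series_fun a holomorphic_on disc"
    and taylor_coeff_series_fun: "taylor_coeff (series_fun a) = a"
proof -
  have R: "fps_conv_radius (Abs_fps a) \<ge> 1" by (rule fps_conv_radius_square_summable[OF assms])
  have "ereal (norm z) < fps_conv_radius (Abs_fps a)" if "z \<in> disc" for z
    using that R by (auto intro: order.strict_trans2[of _ 1])
  then have "eval_fps (Abs_fps a) holomorphic_on disc"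
    by (intro holomorphic_on_eval_fps) auto
  then show hol: "series_fun a holomorphic_on disc"
    by (rule holomorphic_transform) (simp add: series_fun_def)
  have "taylor_coeff (series_fun a) n = taylor_coeff (eval_fps (Abs_fps a)) n" for n
    by (rule taylor_coeff_cong) (simp add: series_fun_def)
  also have "\<dots> n = a n" for n
    using R by (subst taylor_coeff_eval_fps) (auto intro: order.strict_trans2[of 0 1])
  finally show "taylor_coeff (series_fun a) = a" by auto
qed

lemma H2_iff:
  "f \<in> H2 \<longleftrightarrow> f holomorphic_on disc \<and> (\<forall>z. z \<notin> disc \<longrightarrow> f z = 0) \<and>
     square_summable (taylor_coeff f)"
  unfolding H2_def square_summable_def by simp

lemma
  assumes "f \<in> H2"
  shows H2_holomorphic: "f holomorphic_on disc"
    and H2_outside_disc: "z \<notin> disc \<Longrightarrow> f z = 0"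
    and H2_square_summable: "square_summable (taylor_coeff f)"
  using assms by (auto simp: H2_iff)

lemma zero_in_H2: "(\<lambda>z. 0) \<in> H2"
  by (simp add: H2_iff square_summable_def)

lemma series_fun_in_H2: "square_summable a \<Longrightarrow> series_fun a \<in> H2"
  by (simp add: H2_iff holomorphic_series_fun taylor_coeff_series_fun series_fun_def)

lemma
  assumes "f \<in> H2" "g \<in> H2"
  shows taylor_coeff_add_H2:
      "taylor_coeff (\<lambda>z. f z + g z) = (\<lambda>n. taylor_coeff f n + taylor_coeff g n)"
    and taylor_coeff_diff_H2:
      "taylor_coeff (\<lambda>z. f z - g z) = (\<lambda>n. taylor_coeff f n - taylor_coeff g n)"
  using assms by (auto simp: H2_iff taylor_coeff_add taylor_coeff_diff)

lemma add_in_H2: "f \<in> H2 \<Longrightarrow> g \<in> H2 \<Longrightarrow> (\<lambda>z. f z + g z) \<in> H2"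
  by (auto simp: H2_iff taylor_coeff_add_H2 holomorphic_intros intro: square_summable_add)

lemma diff_in_H2: "f \<in> H2 \<Longrightarrow> g \<in> H2 \<Longrightarrow> (\<lambda>z. f z - g z) \<in> H2"
  by (auto simp: H2_iff taylor_coeff_diff_H2 holomorphic_intros intro: square_summable_diff)

lemma H2_eqI:
  assumes "f \<in> H2" "g \<in> H2" "taylor_coeff f = taylor_coeff g"
  shows "f = g"
proof
  fix z
  show "f z = g z"
  proof (cases "z \<in> disc")
    case True
    then show ?thesis
      using sums_taylor_coeff[OF H2_holomorphic[OF assms(1)] True]
        sums_taylor_coeff[OF H2_holomorphic[OF assms(2)] True] assms(3)
      by (simp add: sums_unique2)
  qed (simp add: H2_outside_disc assms)
qed

lemma h2_inner_eq_seq_inner: "h2_inner f g = seq_inner (taylor_coeff f) (taylor_coeff g)"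
  unfolding h2_inner_def seq_inner_def ..

lemma h2_inner_cong:
  assumes "\<And>z. z \<in> disc \<Longrightarrow> f z = f' z" "\<And>z. z \<in> disc \<Longrightarrow> g z = g' z"
  shows "h2_inner f g = h2_inner f' g'"
proof -
  have "taylor_coeff f = taylor_coeff f'" "taylor_coeff g = taylor_coeff g'"
    using assms by (auto intro!: ext taylor_coeff_cong)
  then show ?thesis unfolding h2_inner_eq_seq_inner by simp
qed

lemma h2_inner_add_left:
  assumes "f \<in> H2" "g \<in> H2" "k \<in> H2"
  shows "h2_inner (\<lambda>z. f z + g z) k = h2_inner f k + h2_inner g k"
  using seq_inner_add_left[OF H2_square_summable[OF assms(1)] H2_square_summable[OF assms(2)]
      H2_square_summable[OF assms(3)]]
  by (simp add: h2_inner_eq_seq_inner taylor_coeff_add_H2 assms)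

lemma h2_inner_diff_left:
  assumes "f \<in> H2" "g \<in> H2" "k \<in> H2"
  shows "h2_inner (\<lambda>z. f z - g z) k = h2_inner f k - h2_inner g k"
  using seq_inner_diff_left[OF H2_square_summable[OF assms(1)] H2_square_summable[OF assms(2)]
      H2_square_summable[OF assms(3)]]
  by (simp add: h2_inner_eq_seq_inner taylor_coeff_diff_H2 assms)

lemma h2_inner_commute:
  assumes "f \<in> H2" "g \<in> H2"
  shows "h2_inner g f = cnj (h2_inner f g)"
  unfolding h2_inner_eq_seq_inner
  by (rule seq_inner_commute[OF H2_square_summable[OF assms(1)] H2_square_summable[OF assms(2)]])

lemma H2_eq_0_if_h2_inner_self:
  assumes "f \<in> H2" "h2_inner f f = 0"
  shows "f = (\<lambda>z. 0)"
proof (rule H2_eqI[OF assms(1) zero_in_H2])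
  have "seq_norm_sq (taylor_coeff f) = 0"
    using assms(2) seq_inner_self[OF H2_square_summable[OF assms(1)]]
    by (simp add: h2_inner_eq_seq_inner)
  then show "taylor_coeff f = taylor_coeff (\<lambda>z. 0)"
    using seq_norm_sq_eq_0_iff[OF H2_square_summable[OF assms(1)]] by auto
qed

section \<open>Parseval's identity on circles inside the disc\<close>

abbreviation angle_measure :: "real measure" where
  "angle_measure \<equiv> lebesgue_on {0..2*pi}"

lemma integral_cis_mult_cnj_cis:
  fixes n m :: nat
  shows "integral\<^sup>L angle_measure (\<lambda>t. cis (n * t) * cnj (cis (m * t)))
    = (if n = m then of_real (2 * pi) else 0)"
proof -
  define k where "k = real n - real m"
  have "cis (n * t) * cnj (cis (m * t)) = cis (k * t)" for t :: real
    by (simp add: k_def cis_cnj cis_mult algebra_simps)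
  moreover have "integral\<^sup>L angle_measure (\<lambda>t. cis (k * t)) = integral {0..2*pi} (\<lambda>t. cis (k * t))"
    by (intro lebesgue_integral_eq_integral continuous_imp_integrable_real continuous_intros) auto
  moreover have "((\<lambda>t. cis (k * t)) has_integral 0) {0..2*pi}" if "n \<noteq> m"
  proof -
    define F where "F t = cis (k * t) / (\<i> * k)" for t
    have "((\<lambda>t. cis (k * t)) has_integral F (2*pi) - F 0) {0..2*pi}"
    proof (rule fundamental_theorem_of_calculus)
      fix x :: real
      have "((\<lambda>t. cis (k * t)) has_vector_derivative (\<i> * k) * cis (k * x)) (at x within {0..2*pi})"
        unfolding has_vector_derivative_def
        by (rule has_derivative_eq_rhs[OF
              has_derivative_cis[OF has_derivative_mult_right[OF has_derivative_ident]]])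
          (auto simp: scaleR_conv_of_real algebra_simps)
      then show "(F has_vector_derivative cis (k * x)) (at x within {0..2*pi})"
        unfolding F_def using that by (auto simp: k_def intro!: derivative_eq_intros)
    qed simp
    moreover have "cis (k * (2*pi)) = 1"
      using cis_multiple_2pi[of k] by (simp add: k_def mult_ac)
    ultimately show ?thesis by (simp add: F_def)
  qed
  ultimately show ?thesis
    by (auto simp: k_def scaleR_conv_of_real integral_unique)
qed

lemma continuous_on_circle:
  fixes r :: real
  assumes "continuous_on S f" "\<And>t. r * cis t \<in> S"
  shows "continuous_on {0..2*pi} (\<lambda>t. f (r * cis t))"
  by (rule continuous_on_compose2[OF assms(1)]) (auto intro!: continuous_intros simp: assms(2))

lemma integral_series_trunc_mult_cnj:
  fixes r :: real
  shows "integral\<^sup>L angle_measure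
      (\<lambda>t. series_trunc a N (r * cis t) * cnj (series_trunc b N (r * cis t)))
     = 2 * pi * (\<Sum>n<N. a n * cnj (b n) * r ^ (2*n))"
proof -
  define c where "c n m = a n * cnj (b m) * r ^ n * r ^ m" for n m
  have circle_power: "(r * cis t) ^ n = r ^ n * cis (n * t)" for n :: nat and t :: real
    unfolding power_mult_distrib Complex.DeMoivre of_real_power ..
  have expand: "series_trunc a N (r * cis t) * cnj (series_trunc b N (r * cis t))
     = (\<Sum>n<N. \<Sum>m<N. c n m * (cis (n * t) * cnj (cis (m * t))))" for t :: real
    unfolding series_trunc_def circle_power cnj_sum sum_product
    by (intro sum.cong refl)
      (simp only: c_def complex_cnj_mult complex_cnj_power complex_cnj_complex_of_real mult_ac)
  have integrable: "integrable angle_measure (\<lambda>t. c n m * (cis (n * t) * cnj (cis (m * t))))"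
    for n m
    by (intro continuous_imp_integrable_real continuous_intros)
  have "integral\<^sup>L angle_measure (\<lambda>t. \<Sum>n<N. \<Sum>m<N. c n m * (cis (n * t) * cnj (cis (m * t))))
      = (\<Sum>n<N. \<Sum>m<N. integral\<^sup>L angle_measure (\<lambda>t. c n m * (cis (n * t) * cnj (cis (m * t)))))"
    by (subst Bochner_Integration.integral_sum)
      (use integrable in \<open>auto intro: Bochner_Integration.integrable_sum\<close>)
  also have "\<dots> = (\<Sum>n<N. c n n * (2 * pi))"
    unfolding integral_mult_right_zero integral_cis_mult_cnj_cis
    by (intro sum.cong refl) (simp add: if_distrib[of "\<lambda>x. c _ _ * x"] sum.delta cong: if_cong)
  also have "\<dots> = 2 * pi * (\<Sum>n<N. a n * cnj (b n) * r ^ (2*n))"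
    unfolding sum_distrib_left power_even_eq power2_eq_square of_real_mult c_def
    by (intro sum.cong refl) (simp only: mult_ac)
  finally show ?thesis unfolding expand .
qed

lemma summable_mult_nonneg:
  fixes x y :: "nat \<Rightarrow> real"
  assumes "summable x" "summable y" "\<And>n. 0 \<le> x n" "\<And>n. 0 \<le> y n"
  shows "summable (\<lambda>n. x n * y n)"
proof (rule summable_comparison_test')
  show "summable (\<lambda>n. x n * suminf y)" by (rule summable_mult2[OF assms(1)])
  show "norm (x n * y n) \<le> x n * suminf y" for n
    using sum_le_suminf[OF assms(2), of "{n}"] assms(3,4) by (simp add: mult_left_mono)
qed

lemma summable_norm_taylor_coeff_power:
  fixes r :: real
  assumes "f holomorphic_on disc" "0 \<le> r" "r < 1"
  shows "summable (\<lambda>n. norm (taylor_coeff f n) * r ^ n)"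
proof -
  define \<rho> where "\<rho> = (1 + r) / 2"
  have "of_real \<rho> \<in> disc"
    using assms unfolding mem_ball_0 norm_of_real \<rho>_def by simp
  then have "summable (\<lambda>n. taylor_coeff f n * of_real \<rho> ^ n)"
    using sums_taylor_coeff[OF assms(1)] sums_summable by blast
  then have "summable (\<lambda>n. norm (taylor_coeff f n * of_real r ^ n))"
    by (rule powser_insidea) (simp only: norm_of_real, use assms in \<open>simp add: \<rho>_def\<close>)
  then show ?thesis by (simp add: norm_mult norm_power assms(2))
qed

lemma summable_taylor_coeff_mult_cnj_power:
  fixes r :: real
  assumes "f holomorphic_on disc" "g holomorphic_on disc" "0 \<le> r" "r < 1"
  shows "summable (\<lambda>n. norm (taylor_coeff f n * cnj (taylor_coeff g n) * r ^ (2*n)))"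
  using summable_mult_nonneg[OF summable_norm_taylor_coeff_power[OF assms(1,3,4)]
      summable_norm_taylor_coeff_power[OF assms(2,3,4)]] assms(3)
  by (simp add: norm_mult norm_power power_mult power2_eq_square mult_ac)

lemma norm_series_trunc_circle_le:
  fixes r :: real
  assumes "summable (\<lambda>n. norm (a n) * r ^ n)" "0 \<le> r"
  shows "norm (series_trunc a N (r * cis t)) \<le> (\<Sum>n. norm (a n) * r ^ n)"
proof -
  have "norm (series_trunc a N (r * cis t)) \<le> (\<Sum>n<N. norm (a n) * r ^ n)"
    unfolding series_trunc_def using norm_sum[of "\<lambda>n. a n * (r * cis t) ^ n"] assms(2)
    by (simp add: norm_mult norm_power)
  also have "\<dots> \<le> (\<Sum>n. norm (a n) * r ^ n)"
    by (rule sum_le_suminf[OF assms(1)]) (use assms(2) in auto)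
  finally show ?thesis .
qed

lemma tendsto_series_trunc_taylor_coeff:
  assumes "f holomorphic_on disc" "z \<in> disc"
  shows "(\<lambda>N. series_trunc (taylor_coeff f) N z) \<longlonglongrightarrow> f z"
  using sums_taylor_coeff[OF assms] unfolding sums_def series_trunc_def .

text \<open>On the circle of radius \<open>r < 1\<close> the partial sums are dominated by \<open>\<Sum>|a\<^sub>n| r\<^sup>n\<close>, so
  the identity for polynomials passes to the limit by dominated convergence.\<close>

lemma circle_integral_Parseval:
  fixes r :: real
  assumes f: "f holomorphic_on disc" and g: "g holomorphic_on disc" and r: "0 \<le> r" "r < 1"
  shows "integral\<^sup>L angle_measure (\<lambda>t. f (r * cis t) * cnj (g (r * cis t)))
    = 2 * pi * (\<Sum>n. taylor_coeff f n * cnj (taylor_coeff g n) * r ^ (2*n))"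
proof -
  define a where "a = taylor_coeff f"
  define b where "b = taylor_coeff g"
  have sa: "summable (\<lambda>n. norm (a n) * r ^ n)" and sb: "summable (\<lambda>n. norm (b n) * r ^ n)"
    unfolding a_def b_def using summable_norm_taylor_coeff_power f g r by blast+
  define B where "B = (\<Sum>n. norm (a n) * r ^ n) * (\<Sum>n. norm (b n) * r ^ n)"
  define s where "s N t = series_trunc a N (r * cis t) * cnj (series_trunc b N (r * cis t))" for N t
  have in_disc: "r * cis t \<in> disc" for t using r by (simp add: norm_mult)
  have "(\<lambda>N. integral\<^sup>L angle_measure (s N))
      \<longlonglongrightarrow> integral\<^sup>L angle_measure (\<lambda>t. f (r * cis t) * cnj (g (r * cis t)))"
  proof (rule integral_dominated_convergence[where w = "\<lambda>_. B"])
    show "(\<lambda>t. f (r * cis t) * cnj (g (r * cis t))) \<in> borel_measurable angle_measure"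
      using in_disc by (intro continuous_imp_measurable_on_sets_lebesgue continuous_intros
          continuous_on_circle[OF holomorphic_on_imp_continuous_on[OF f]]
          continuous_on_circle[OF holomorphic_on_imp_continuous_on[OF g]]) auto
    show "s N \<in> borel_measurable angle_measure" for N unfolding s_def series_trunc_def
      by (intro continuous_imp_measurable_on_sets_lebesgue continuous_intros) auto
    show "integrable angle_measure (\<lambda>_. B)"
      by (intro continuous_imp_integrable_real continuous_intros)
    show "AE t in angle_measure. (\<lambda>N. s N t) \<longlonglongrightarrow> f (r * cis t) * cnj (g (r * cis t))"
      unfolding s_def a_def b_def
      by (intro always_eventually allI tendsto_mult tendsto_cnj tendsto_series_trunc_taylor_coeff
          f g in_disc)
    show "AE t in angle_measure. norm (s N t) \<le> B" for N
      unfolding s_def B_def norm_mult complex_mod_cnj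
      by (intro always_eventually allI mult_mono norm_ge_zero
          norm_series_trunc_circle_le[OF sa r(1)] norm_series_trunc_circle_le[OF sb r(1)]
          order.trans[OF norm_ge_zero norm_series_trunc_circle_le[OF sa r(1)]])
  qed
  moreover have "(\<lambda>N. integral\<^sup>L angle_measure (s N))
      \<longlonglongrightarrow> 2 * pi * (\<Sum>n. a n * cnj (b n) * r ^ (2*n))"
    unfolding s_def integral_series_trunc_mult_cnj
    using summable_taylor_coeff_mult_cnj_power[OF f g r] unfolding a_def b_def
    by (rule tendsto_mult_left[OF summable_LIMSEQ[OF summable_norm_cancel]])
  ultimately show ?thesis
    unfolding a_def b_def by (rule LIMSEQ_unique)
qed

lemma summable_norm_taylor_coeff_power2:
  fixes r :: real
  assumes "f holomorphic_on disc" "0 \<le> r" "r < 1"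
  shows "summable (\<lambda>n. (norm (taylor_coeff f n))\<^sup>2 * r ^ (2*n))"
  using summable_taylor_coeff_mult_cnj_power[OF assms(1) assms] assms(2)
  by (simp add: norm_mult norm_power power2_eq_square)

lemma circle_integral_norm_Parseval:
  fixes r :: real
  assumes f: "f holomorphic_on disc" and r: "0 \<le> r" "r < 1"
  shows "integral\<^sup>L angle_measure (\<lambda>t. (norm (f (r * cis t)))\<^sup>2)
    = 2 * pi * (\<Sum>n. (norm (taylor_coeff f n))\<^sup>2 * r ^ (2*n))"
proof -
  have "complex_of_real (integral\<^sup>L angle_measure (\<lambda>t. (norm (f (r * cis t)))\<^sup>2))
      = integral\<^sup>L angle_measure (\<lambda>t. f (r * cis t) * cnj (f (r * cis t)))"
    by (simp only: integral_complex_of_real[symmetric] complex_norm_square)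
  also have "\<dots> = 2 * pi * (\<Sum>n. complex_of_real ((norm (taylor_coeff f n))\<^sup>2 * r ^ (2*n)))"
    unfolding circle_integral_Parseval[OF f f r] by (simp add: complex_norm_square[symmetric])
  also have "\<dots> = complex_of_real (2 * pi * (\<Sum>n. (norm (taylor_coeff f n))\<^sup>2 * r ^ (2*n)))"
    by (simp add: suminf_of_real summable_norm_taylor_coeff_power2[OF f r])
  finally show ?thesis by (simp only: of_real_eq_iff)
qed

section \<open>Multiplication operators on the Hardy space\<close>

lemma summable_if_power_sums_bounded:
  fixes x :: "nat \<Rightarrow> real"
  assumes nonneg: "\<And>n. x n \<ge> 0"
    and bounded: "\<And>r. 0 \<le> r \<Longrightarrow> r < 1 \<Longrightarrow>
      summable (\<lambda>n. x n * r ^ (2*n)) \<and> (\<Sum>n. x n * r ^ (2*n)) \<le> K"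
  shows "summable x" "suminf x \<le> K"
proof -
  have partial_sums: "(\<Sum>n<N. x n) \<le> K" for N
  proof -
    have "eventually (\<lambda>r::real. r \<in> {0<..<1}) (at_left 1)"
      by (rule eventually_at_left_real) simp
    then have ev: "eventually (\<lambda>r. (\<Sum>n<N. x n * r ^ (2*n)) \<le> K) (at_left (1::real))"
    proof eventually_elim
      case (elim r)
      then have "(\<Sum>n<N. x n * r ^ (2*n)) \<le> (\<Sum>n. x n * r ^ (2*n))"
        using bounded[of r] nonneg by (intro sum_le_suminf) auto
      also have "\<dots> \<le> K" using bounded[of r] elim by auto
      finally show ?case .
    qed
    have lim: "((\<lambda>r. \<Sum>n<N. x n * r ^ (2*n)) \<longlongrightarrow> (\<Sum>n<N. x n * 1 ^ (2*n))) (at_left 1)"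
      by (intro tendsto_intros)
    have "(\<Sum>n<N. x n * 1 ^ (2*n)) \<le> K"
      by (rule tendsto_upperbound[OF lim ev]) simp
    then show ?thesis by simp
  qed
  show "summable x" by (rule summableI_nonneg_bounded[OF nonneg partial_sums])
  show "suminf x \<le> K" by (rule suminf_le_const[OF \<open>summable x\<close> partial_sums])
qed

lemma suminf_norm_taylor_coeff_power2_le:
  fixes r :: real
  assumes f: "f holomorphic_on disc" "square_summable (taylor_coeff f)" and r: "0 \<le> r" "r < 1"
  shows "(\<Sum>n. (norm (taylor_coeff f n))\<^sup>2 * r ^ (2*n)) \<le> seq_norm_sq (taylor_coeff f)"
  unfolding seq_norm_sq_def
proof (rule suminf_le)
  show "summable (\<lambda>n. (norm (taylor_coeff f n))\<^sup>2 * r ^ (2*n))"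
    by (rule summable_norm_taylor_coeff_power2[OF f(1) r])
  show "summable (\<lambda>n. (norm (taylor_coeff f n))\<^sup>2)"
    using f(2) unfolding square_summable_def .
  show "(norm (taylor_coeff f n))\<^sup>2 * r ^ (2*n) \<le> (norm (taylor_coeff f n))\<^sup>2" for n
    using r by (intro mult_left_le power_le_one) auto
qed

text \<open>On each circle of radius \<open>r < 1\<close>, \<open>|v f|\<^sup>2 \<le> K\<^sup>2 |f|\<^sup>2\<close>; Parseval turns this into a
  bound on the Abel means of the squared Taylor coefficients of \<open>v f\<close>.\<close>

lemma circle_sum_taylor_coeff_mult_le:
  fixes r :: real
  assumes v: "v holomorphic_on disc" and K: "\<And>z. z \<in> disc \<Longrightarrow> norm (v z) \<le> K"
    and f: "f holomorphic_on disc" "square_summable (taylor_coeff f)" and r: "0 \<le> r" "r < 1"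
  shows "(\<Sum>n. (norm (taylor_coeff (\<lambda>z. v z * f z) n))\<^sup>2 * r ^ (2*n))
    \<le> K\<^sup>2 * seq_norm_sq (taylor_coeff f)"
proof -
  define F where "F = (\<lambda>z. v z * f z)"
  have F: "F holomorphic_on disc" unfolding F_def using v f by (intro holomorphic_intros)
  have rr: "\<bar>r\<bar> < 1" using r by simp
  have "2 * pi * (\<Sum>n. (norm (taylor_coeff F n))\<^sup>2 * r ^ (2*n))
      = integral\<^sup>L angle_measure (\<lambda>t. (norm (F (r * cis t)))\<^sup>2)"
    by (rule circle_integral_norm_Parseval[OF F r, symmetric])
  also have "\<dots> \<le> integral\<^sup>L angle_measure (\<lambda>t. K\<^sup>2 * (norm (f (r * cis t)))\<^sup>2)"
  proof (rule integral_mono)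
    show "integrable angle_measure (\<lambda>t. (norm (F (r * cis t)))\<^sup>2)"
      using rr by (intro continuous_imp_integrable_real continuous_intros
          continuous_on_circle[OF holomorphic_on_imp_continuous_on[OF F]]) (auto simp: norm_mult)
    show "integrable angle_measure (\<lambda>t. K\<^sup>2 * (norm (f (r * cis t)))\<^sup>2)"
      using rr by (intro continuous_imp_integrable_real continuous_intros
          continuous_on_circle[OF holomorphic_on_imp_continuous_on[OF f(1)]]) (auto simp: norm_mult)
    fix t
    have "norm (v (r * cis t)) \<le> K" using rr by (intro K) (simp add: norm_mult)
    then have "norm (F (r * cis t)) \<le> K * norm (f (r * cis t))"
      unfolding F_def norm_mult by (intro mult_right_mono) auto
    then show "(norm (F (r * cis t)))\<^sup>2 \<le> K\<^sup>2 * (norm (f (r * cis t)))\<^sup>2"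
      by (metis power_mono norm_ge_zero power_mult_distrib)
  qed
  also have "\<dots> = K\<^sup>2 * (2 * pi * (\<Sum>n. (norm (taylor_coeff f n))\<^sup>2 * r ^ (2*n)))"
    by (simp add: circle_integral_norm_Parseval[OF f(1) r])
  also have "\<dots> \<le> K\<^sup>2 * (2 * pi * seq_norm_sq (taylor_coeff f))"
    using suminf_norm_taylor_coeff_power2_le[OF f r] by (intro mult_left_mono) auto
  finally show ?thesis unfolding F_def by simp
qed

lemma
  assumes v: "v holomorphic_on disc" and K: "\<And>z. z \<in> disc \<Longrightarrow> norm (v z) \<le> K"
    and f: "f holomorphic_on disc" "square_summable (taylor_coeff f)"
  shows square_summable_taylor_coeff_mult: "square_summable (taylor_coeff (\<lambda>z. v z * f z))"
    and seq_norm_sq_taylor_coeff_mult_le: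
      "seq_norm_sq (taylor_coeff (\<lambda>z. v z * f z)) \<le> K\<^sup>2 * seq_norm_sq (taylor_coeff f)"
proof -
  have vf: "(\<lambda>z. v z * f z) holomorphic_on disc" using v f by (intro holomorphic_intros)
  note bounded = conjI[OF summable_norm_taylor_coeff_power2[OF vf]
      circle_sum_taylor_coeff_mult_le[OF v K f]]
  show "square_summable (taylor_coeff (\<lambda>z. v z * f z))"
    unfolding square_summable_def by (rule summable_if_power_sums_bounded(1)[OF _ bounded]) simp_all
  show "seq_norm_sq (taylor_coeff (\<lambda>z. v z * f z)) \<le> K\<^sup>2 * seq_norm_sq (taylor_coeff f)"
    using summable_if_power_sums_bounded(2)[OF _ bounded] by (simp add: seq_norm_sq_def)
qed

lemma mult_in_H2:
  assumes "v holomorphic_on disc" "\<And>z. z \<in> disc \<Longrightarrow> norm (v z) \<le> K" "f \<in> H2"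
  shows "(\<lambda>z. v z * f z) \<in> H2"
proof -
  have "square_summable (taylor_coeff (\<lambda>z. v z * f z))"
    using assms(1,2) H2_holomorphic[OF assms(3)] H2_square_summable[OF assms(3)]
    by (rule square_summable_taylor_coeff_mult)
  then show ?thesis
    using assms(1) H2_holomorphic[OF assms(3)] H2_outside_disc[OF assms(3)]
    by (auto simp: H2_iff intro!: holomorphic_intros)
qed

lemma
  assumes "inner_fun v"
  shows holomorphic_inner_fun: "v holomorphic_on disc"
    and inner_fun_bounded: "\<exists>K. \<forall>z\<in>disc. norm (v z) \<le> K"
  using assms unfolding inner_fun_def bounded_iff by auto

lemma square_summable_taylor_coeff_mult_inner_fun:
  assumes "inner_fun v" "f holomorphic_on disc" "square_summable (taylor_coeff f)"
  shows "square_summable (taylor_coeff (\<lambda>z. v z * f z))"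
  using inner_fun_bounded[OF assms(1)]
    square_summable_taylor_coeff_mult[OF holomorphic_inner_fun[OF assms(1)] _ assms(2,3)] by blast

lemma mult_inner_fun_in_H2: "inner_fun v \<Longrightarrow> f \<in> H2 \<Longrightarrow> (\<lambda>z. v z * f z) \<in> H2"
  using inner_fun_bounded mult_in_H2[OF holomorphic_inner_fun] by metis

lemma power_mult_inner_fun_in_H2:
  assumes "inner_fun v" "f \<in> H2"
  shows "(\<lambda>z. v z ^ n * f z) \<in> H2"
proof (induction n)
  case (Suc n)
  then show ?case
    using mult_inner_fun_in_H2[OF assms(1) Suc] by (simp add: mult.assoc)
qed (simp add: assms(2))

section \<open>Multiplication by an inner function is isometric\<close>

lemma tendsto_suminf_power_weights:
  fixes x :: "nat \<Rightarrow> complex" and \<rho> :: "nat \<Rightarrow> real"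
  assumes "summable (\<lambda>n. norm (x n))" "\<rho> \<longlonglongrightarrow> 1" "\<And>k. 0 \<le> \<rho> k \<and> \<rho> k \<le> 1"
  shows "(\<lambda>k. \<Sum>n. x n * of_real (\<rho> k ^ (2*n))) \<longlonglongrightarrow> (\<Sum>n. x n)"
proof -
  define g where "g r = (\<Sum>n. x n * of_real (r ^ (2*n)))" for r :: real
  have "uniform_limit {0..1} (\<lambda>N r. \<Sum>n<N. x n * of_real (r ^ (2*n))) g sequentially"
    unfolding g_def
  proof (rule Weierstrass_m_test[OF _ assms(1)])
    fix n and r :: real assume "r \<in> {0..1}"
    then have "norm (of_real (r ^ (2*n)) :: complex) \<le> 1"
      by (simp only: norm_of_real power_abs[symmetric]) (simp add: power_le_one)
    then show "norm (x n * of_real (r ^ (2*n))) \<le> norm (x n)"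
      by (simp only: norm_mult mult_left_le norm_ge_zero)
  qed
  then have "continuous_on {0..1} g"
    by (rule uniform_limit_theorem[rotated]) (auto intro!: always_eventually continuous_intros)
  then have "(\<lambda>k. g (\<rho> k)) \<longlonglongrightarrow> g 1"
    by (rule continuous_on_tendsto_compose[OF _ assms(2)]) (use assms(3) in auto)
  then show ?thesis by (simp add: g_def)
qed

lemma tendsto_circle_integral_h2_inner:
  fixes \<rho> :: "nat \<Rightarrow> real"
  assumes F: "F holomorphic_on disc" "square_summable (taylor_coeff F)"
    and G: "G holomorphic_on disc" "square_summable (taylor_coeff G)"
    and \<rho>: "\<rho> \<longlonglongrightarrow> 1" "\<And>k. 0 \<le> \<rho> k \<and> \<rho> k < 1"
  shows "(\<lambda>k. integral\<^sup>L angle_measure (\<lambda>t. F (\<rho> k * cis t) * cnj (G (\<rho> k * cis t))))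
    \<longlonglongrightarrow> 2 * pi * h2_inner F G"
proof -
  have "(\<lambda>k. \<Sum>n. taylor_coeff F n * cnj (taylor_coeff G n) * of_real (\<rho> k ^ (2*n)))
      \<longlonglongrightarrow> h2_inner F G"
    unfolding h2_inner_def using \<rho>(2)
    by (intro tendsto_suminf_power_weights[OF summable_norm_seq_inner[OF F(2) G(2)] \<rho>(1)])
      (auto intro: less_imp_le)
  moreover have "integral\<^sup>L angle_measure (\<lambda>t. F (\<rho> k * cis t) * cnj (G (\<rho> k * cis t)))
      = 2 * pi * (\<Sum>n. taylor_coeff F n * cnj (taylor_coeff G n) * of_real (\<rho> k ^ (2*n)))" for k
    using circle_integral_Parseval[OF F(1) G(1)] \<rho>(2)[of k] by blast
  ultimately show ?thesis
    by (simp only:) (rule tendsto_mult_left)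
qed

lemma tendsto_radius_circle:
  fixes \<rho> :: "nat \<Rightarrow> real"
  assumes p: "continuous_on (cball 0 1) p" and \<rho>: "\<rho> \<longlonglongrightarrow> 1" "\<And>k. 0 \<le> \<rho> k \<and> \<rho> k < 1"
  shows "(\<lambda>k. p (\<rho> k * cis t)) \<longlonglongrightarrow> p (cis t)"
proof -
  have "(\<lambda>k. complex_of_real (\<rho> k)) \<longlonglongrightarrow> 1"
    using tendsto_of_real[OF \<rho>(1)] by simp
  then have lim: "(\<lambda>k. \<rho> k * cis t) \<longlonglongrightarrow> 1 * cis t" by (rule tendsto_mult_right)
  have inside: "eventually (\<lambda>k. \<rho> k * cis t \<in> cball 0 1) sequentially"
    using \<rho>(2) by (intro always_eventually) (auto simp: norm_mult intro: less_imp_le)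
  have "(\<lambda>k. p (\<rho> k * cis t)) \<longlonglongrightarrow> p (1 * cis t)"
    by (rule continuous_on_tendsto_compose[OF p lim _ inside]) simp
  then show ?thesis by simp
qed

lemma AE_tendsto_inner_fun_circle:
  fixes \<rho> :: "nat \<Rightarrow> real"
  assumes v: "inner_fun v" and \<rho>: "\<rho> \<longlonglongrightarrow> 1" "\<And>k. 0 \<le> \<rho> k \<and> \<rho> k < 1"
  shows "AE t in angle_measure. \<exists>L. (\<lambda>k. v (\<rho> k * cis t)) \<longlonglongrightarrow> L \<and> norm L = 1"
proof -
  have \<rho>_left: "filterlim \<rho> (at_left 1) sequentially"
    by (rule tendsto_imp_filterlim_at_left[OF \<rho>(1)]) (use \<rho>(2) in auto)
  from v have "AE t in angle_measure. \<exists>L. ((\<lambda>r. v (r * cis t)) \<longlongrightarrow> L) (at_left 1) \<and> norm L = 1"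
    unfolding inner_fun_def by blast
  then show ?thesis
    by eventually_elim (use filterlim_compose[OF _ \<rho>_left] in blast)
qed

lemma tendsto_circle_integral_inner_fun:
  fixes \<rho> :: "nat \<Rightarrow> real" and p :: "complex \<Rightarrow> complex"
  assumes v: "inner_fun v" and p: "continuous_on (cball 0 1) p"
    and \<rho>: "\<rho> \<longlonglongrightarrow> 1" "\<And>k. 0 \<le> \<rho> k \<and> \<rho> k < 1"
  shows "(\<lambda>k. integral\<^sup>L angle_measure (\<lambda>t. (norm (v (\<rho> k * cis t)))\<^sup>2 * p (\<rho> k * cis t)))
    \<longlonglongrightarrow> integral\<^sup>L angle_measure (\<lambda>t. p (cis t))"
proof -
  obtain K where K: "\<And>z. z \<in> disc \<Longrightarrow> norm (v z) \<le> K" using inner_fun_bounded[OF v] by blast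
  obtain P where P: "\<And>z. z \<in> cball 0 1 \<Longrightarrow> norm (p z) \<le> P"
    using compact_imp_bounded[OF compact_continuous_image[OF p compact_cball]]
    unfolding bounded_iff by blast
  have in_disc: "\<rho> k * cis t \<in> disc" for k t
    using \<rho>(2)[of k] by (simp add: norm_mult)
  show ?thesis
  proof (rule integral_dominated_convergence[where w = "\<lambda>_. K\<^sup>2 * P"])
    show "(\<lambda>t. p (cis t)) \<in> borel_measurable angle_measure"
      using continuous_on_circle[OF p, of 1]
      by (intro continuous_imp_measurable_on_sets_lebesgue) auto
    show "(\<lambda>t. (norm (v (\<rho> k * cis t)))\<^sup>2 * p (\<rho> k * cis t)) \<in> borel_measurable angle_measure" for k
      using in_disc
      by (intro continuous_imp_measurable_on_sets_lebesgue continuous_intros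
          continuous_on_circle[OF holomorphic_on_imp_continuous_on[OF holomorphic_inner_fun[OF v]]]
          continuous_on_circle[OF p]) (auto intro: less_imp_le)
    show "integrable angle_measure (\<lambda>_. K\<^sup>2 * P)"
      by (intro continuous_imp_integrable_real continuous_intros)
    show "AE t in angle_measure. norm ((norm (v (\<rho> k * cis t)))\<^sup>2 * p (\<rho> k * cis t))
        \<le> K\<^sup>2 * P" for k
    proof (intro always_eventually allI)
      fix t
      have "(norm (v (\<rho> k * cis t)))\<^sup>2 \<le> K\<^sup>2" using K[OF in_disc] by (intro power_mono) auto
      moreover have "norm (p (\<rho> k * cis t)) \<le> P" using in_disc[of k t] by (intro P) auto
      ultimately show "norm ((norm (v (\<rho> k * cis t)))\<^sup>2 * p (\<rho> k * cis t)) \<le> K\<^sup>2 * P"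
        by (simp add: norm_mult norm_power mult_mono)
    qed
    show "AE t in angle_measure. (\<lambda>k. (norm (v (\<rho> k * cis t)))\<^sup>2 * p (\<rho> k * cis t)) \<longlonglongrightarrow> p (cis t)"
      using AE_tendsto_inner_fun_circle[OF v \<rho>]
    proof eventually_elim
      case (elim t)
      then obtain L where L: "(\<lambda>k. v (\<rho> k * cis t)) \<longlonglongrightarrow> L" and "norm L = 1" by blast
      have "(\<lambda>k. (norm (v (\<rho> k * cis t)))\<^sup>2 * p (\<rho> k * cis t)) \<longlonglongrightarrow> (norm L)\<^sup>2 * p (cis t)"
        by (intro tendsto_mult tendsto_of_real tendsto_power tendsto_norm L
            tendsto_radius_circle[OF p \<rho>])
      then show ?case using \<open>norm L = 1\<close> by simp
    qed
  qed
qed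

lemma h2_inner_mult_inner_fun_series_trunc:
  assumes v: "inner_fun v"
  shows "h2_inner (\<lambda>z. v z * series_trunc a N z) (\<lambda>z. v z * series_trunc b N z)
    = (\<Sum>n<N. a n * cnj (b n))"
proof -
  define \<rho> where "\<rho> = (\<lambda>k. real k / real (Suc k))"
  have \<rho>: "\<rho> \<longlonglongrightarrow> 1" "\<And>k. 0 \<le> \<rho> k \<and> \<rho> k < 1"
    unfolding \<rho>_def by (rule LIMSEQ_n_over_Suc_n) simp
  have hol: "(\<lambda>z. v z * series_trunc c N z) holomorphic_on disc" for c
    using holomorphic_inner_fun[OF v] by (intro holomorphic_intros)
  have sq: "square_summable (taylor_coeff (\<lambda>z. v z * series_trunc c N z))" for c
    by (rule square_summable_taylor_coeff_mult_inner_fun[OF v holomorphic_series_trunc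
          square_summable_taylor_coeff_series_trunc])
  have integrand: "v z * series_trunc a N z * cnj (v z * series_trunc b N z)
      = (norm (v z))\<^sup>2 * (series_trunc a N z * cnj (series_trunc b N z))" for z
    unfolding complex_norm_square by (simp add: mult_ac)
  have cont: "continuous_on (cball 0 1) (\<lambda>z. series_trunc a N z * cnj (series_trunc b N z))"
    unfolding series_trunc_def by (intro continuous_intros)
  have "2 * pi * h2_inner (\<lambda>z. v z * series_trunc a N z) (\<lambda>z. v z * series_trunc b N z)
      = integral\<^sup>L angle_measure (\<lambda>t. series_trunc a N (cis t) * cnj (series_trunc b N (cis t)))"
    using tendsto_circle_integral_h2_inner[OF hol[of a] sq[of a] hol[of b] sq[of b] \<rho>]
      tendsto_circle_integral_inner_fun[OF v cont \<rho>]
    unfolding integrand by (rule LIMSEQ_unique)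
  also have "\<dots> = 2 * pi * (\<Sum>n<N. a n * cnj (b n))"
    using integral_series_trunc_mult_cnj[of a N 1 b] by simp
  finally show ?thesis by simp
qed

lemma tendsto_taylor_coeff_mult_series_trunc:
  assumes v: "v holomorphic_on disc" and K: "\<And>z. z \<in> disc \<Longrightarrow> norm (v z) \<le> K"
    and f: "f holomorphic_on disc" "square_summable (taylor_coeff f)"
  shows "(\<lambda>N. seq_norm_sq (\<lambda>n. taylor_coeff (\<lambda>z. v z * series_trunc (taylor_coeff f) N z) n
      - taylor_coeff (\<lambda>z. v z * f z) n)) \<longlonglongrightarrow> 0"
proof -
  define a where "a = taylor_coeff f"
  define D where "D N z = series_trunc a N z - f z" for N z
  have D: "D N holomorphic_on disc" for N
    unfolding D_def using f(1) by (intro holomorphic_intros)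
  have coeff_D: "taylor_coeff (D N) = (\<lambda>n. (if n < N then a n else 0) - a n)" for N
    unfolding D_def[abs_def] using f(1)
    by (simp add: fun_eq_iff taylor_coeff_diff taylor_coeff_series_trunc a_def holomorphic_intros)
  have sq_D: "square_summable (taylor_coeff (D N))" for N
    unfolding coeff_D
    by (rule square_summable_diff[OF square_summable_finite_support[of N] f(2)[folded a_def]]) auto
  have "taylor_coeff (\<lambda>z. v z * series_trunc a N z) n - taylor_coeff (\<lambda>z. v z * f z) n
      = taylor_coeff (\<lambda>z. v z * D N z) n" for N n
    using v f(1) by (simp add: D_def right_diff_distrib taylor_coeff_diff holomorphic_intros)
  then have coeff_vD: "(\<lambda>n. taylor_coeff (\<lambda>z. v z * series_trunc a N z) n
      - taylor_coeff (\<lambda>z. v z * f z) n) = taylor_coeff (\<lambda>z. v z * D N z)" for N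
    by auto
  have le: "norm (seq_norm_sq (taylor_coeff (\<lambda>z. v z * D N z)))
      \<le> K\<^sup>2 * seq_norm_sq (\<lambda>n. (if n < N then a n else 0) - a n)" for N
    using seq_norm_sq_taylor_coeff_mult_le[OF v K D sq_D]
      seq_norm_sq_nonneg[OF square_summable_taylor_coeff_mult[OF v K D sq_D]]
    unfolding coeff_D by simp
  have "(\<lambda>N. K\<^sup>2 * seq_norm_sq (\<lambda>n. (if n < N then a n else 0) - a n)) \<longlonglongrightarrow> K\<^sup>2 * 0"
    using f(2) unfolding a_def by (intro tendsto_mult_left tendsto_seq_norm_sq_truncation)
  then have "(\<lambda>N. seq_norm_sq (taylor_coeff (\<lambda>z. v z * D N z))) \<longlonglongrightarrow> 0"
    by (intro Lim_null_comparison[OF always_eventually[OF allI[OF le]]]) simp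
  then show ?thesis unfolding a_def[symmetric] coeff_vD .
qed

lemma h2_inner_mult_inner_fun:
  assumes v: "inner_fun v"
    and f: "f holomorphic_on disc" "square_summable (taylor_coeff f)"
    and g: "g holomorphic_on disc" "square_summable (taylor_coeff g)"
  shows "h2_inner (\<lambda>z. v z * f z) (\<lambda>z. v z * g z) = h2_inner f g"
proof -
  obtain K where K: "\<And>z. z \<in> disc \<Longrightarrow> norm (v z) \<le> K" using inner_fun_bounded[OF v] by blast
  note hol_v = holomorphic_inner_fun[OF v]
  have "(\<lambda>N. h2_inner (\<lambda>z. v z * series_trunc (taylor_coeff f) N z)
      (\<lambda>z. v z * series_trunc (taylor_coeff g) N z)) \<longlonglongrightarrow> h2_inner (\<lambda>z. v z * f z) (\<lambda>z. v z * g z)"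
    unfolding h2_inner_eq_seq_inner
  proof (rule tendsto_seq_inner)
    show "square_summable (taylor_coeff (\<lambda>z. v z * f z))"
      and "square_summable (taylor_coeff (\<lambda>z. v z * g z))"
      by (intro square_summable_taylor_coeff_mult_inner_fun[OF v] f g)+
    show "square_summable (taylor_coeff (\<lambda>z. v z * series_trunc (taylor_coeff f) N z))"
      and "square_summable (taylor_coeff (\<lambda>z. v z * series_trunc (taylor_coeff g) N z))" for N
      by (intro square_summable_taylor_coeff_mult_inner_fun[OF v] holomorphic_series_trunc
          square_summable_taylor_coeff_series_trunc)+
    show "(\<lambda>N. seq_norm_sq (\<lambda>n. taylor_coeff (\<lambda>z. v z * series_trunc (taylor_coeff f) N z) n
        - taylor_coeff (\<lambda>z. v z * f z) n)) \<longlonglongrightarrow> 0"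
      by (rule tendsto_taylor_coeff_mult_series_trunc[OF hol_v K f])
    show "(\<lambda>N. seq_norm_sq (\<lambda>n. taylor_coeff (\<lambda>z. v z * series_trunc (taylor_coeff g) N z) n
        - taylor_coeff (\<lambda>z. v z * g z) n)) \<longlonglongrightarrow> 0"
      by (rule tendsto_taylor_coeff_mult_series_trunc[OF hol_v K g])
  qed
  moreover have "(\<lambda>N. h2_inner (\<lambda>z. v z * series_trunc (taylor_coeff f) N z)
      (\<lambda>z. v z * series_trunc (taylor_coeff g) N z)) \<longlonglongrightarrow> h2_inner f g"
    unfolding h2_inner_mult_inner_fun_series_trunc[OF v] h2_inner_def
    by (rule summable_LIMSEQ[OF summable_seq_inner[OF f(2) g(2)]])
  ultimately show ?thesis
    by (rule LIMSEQ_unique)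
qed

section \<open>Model spaces and the compressed operator\<close>

lemma square_summable_taylor_coeff_power: "square_summable (taylor_coeff (\<lambda>z. z ^ n))"
  by (rule square_summable_finite_support[of "Suc n"]) (simp add: taylor_coeff_power)

lemma h2_inner_mult_inner_fun_power:
  assumes "inner_fun \<Theta>"
  shows "h2_inner (\<lambda>z. \<Theta> z * z ^ n) (\<lambda>z. \<Theta> z * z ^ m) = (if n = m then 1 else 0)"
proof -
  have "h2_inner (\<lambda>z. \<Theta> z * z ^ n) (\<lambda>z. \<Theta> z * z ^ m) = h2_inner (\<lambda>z. z ^ n) (\<lambda>z. z ^ m)"
    by (intro h2_inner_mult_inner_fun[OF assms] holomorphic_intros
        square_summable_taylor_coeff_power)
  also have "\<dots> = (if n = m then 1 else 0)"
    unfolding h2_inner_def taylor_coeff_power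
    by (subst suminf_finite[of "{n}"]) auto
  finally show ?thesis .
qed

lemma square_summable_h2_inner_mult_inner_fun_power:
  assumes "inner_fun \<Theta>" "f \<in> H2"
  shows "square_summable (\<lambda>n. h2_inner f (\<lambda>z. \<Theta> z * z ^ n))"
  unfolding square_summable_def
proof (rule summableI_nonneg_bounded)
  have E: "square_summable (taylor_coeff (\<lambda>z. \<Theta> z * z ^ n))" for n
    by (intro square_summable_taylor_coeff_mult_inner_fun[OF assms(1)] holomorphic_intros
        square_summable_taylor_coeff_power)
  show "(\<Sum>n<N. (norm (h2_inner f (\<lambda>z. \<Theta> z * z ^ n)))\<^sup>2) \<le> seq_norm_sq (taylor_coeff f)" for N
    unfolding h2_inner_eq_seq_inner
    by (rule seq_Bessel_inequality[OF H2_square_summable[OF assms(2)] E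
          h2_inner_mult_inner_fun_power[OF assms(1), unfolded h2_inner_eq_seq_inner]])
qed simp

lemma taylor_coeff_mult_series_trunc:
  assumes "v holomorphic_on disc"
  shows "taylor_coeff (\<lambda>z. v z * series_trunc a N z) m
    = (\<Sum>n<N. a n * taylor_coeff (\<lambda>z. v z * z ^ n) m)"
proof -
  have "(\<lambda>z. v z * series_trunc a N z) = (\<lambda>z. \<Sum>n<N. a n * (v z * z ^ n))"
    by (simp add: series_trunc_def sum_distrib_left mult_ac)
  then show ?thesis
    using assms by (simp add: taylor_coeff_sum taylor_coeff_cmult holomorphic_intros)
qed

lemma h2_inner_mult_series_trunc_right:
  assumes \<Theta>: "inner_fun \<Theta>" and f: "f \<in> H2"
  shows "h2_inner f (\<lambda>z. \<Theta> z * series_trunc a N z)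
    = (\<Sum>n<N. h2_inner f (\<lambda>z. \<Theta> z * z ^ n) * cnj (a n))"
  unfolding h2_inner_eq_seq_inner taylor_coeff_mult_series_trunc[OF holomorphic_inner_fun[OF \<Theta>]]
  by (subst seq_inner_sum_cmult_right[OF H2_square_summable[OF f]])
    (simp_all add: mult.commute square_summable_taylor_coeff_mult_inner_fun[OF \<Theta>] holomorphic_intros
      square_summable_taylor_coeff_power)

lemma h2_inner_mult_inner_fun_eq_seq_inner:
  assumes \<Theta>: "inner_fun \<Theta>" and f: "f \<in> H2" and k: "k \<in> H2"
  shows "h2_inner f (\<lambda>z. \<Theta> z * k z)
    = seq_inner (\<lambda>n. h2_inner f (\<lambda>z. \<Theta> z * z ^ n)) (taylor_coeff k)"
proof -
  obtain K where K: "\<And>z. z \<in> disc \<Longrightarrow> norm (\<Theta> z) \<le> K" using inner_fun_bounded[OF \<Theta>] by blast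
  note k' = H2_holomorphic[OF k] H2_square_summable[OF k]
  have "(\<lambda>N. h2_inner f (\<lambda>z. \<Theta> z * series_trunc (taylor_coeff k) N z)) \<longlonglongrightarrow> h2_inner f (\<lambda>z. \<Theta> z * k z)"
    unfolding h2_inner_eq_seq_inner
  proof (rule tendsto_seq_inner)
    show "square_summable (taylor_coeff (\<lambda>z. \<Theta> z * k z))"
      by (rule square_summable_taylor_coeff_mult_inner_fun[OF \<Theta> k'])
    show "square_summable (taylor_coeff (\<lambda>z. \<Theta> z * series_trunc (taylor_coeff k) N z))" for N
      by (intro square_summable_taylor_coeff_mult_inner_fun[OF \<Theta>] holomorphic_series_trunc
          square_summable_taylor_coeff_series_trunc)
    show "(\<lambda>N. seq_norm_sq (\<lambda>n. taylor_coeff (\<lambda>z. \<Theta> z * series_trunc (taylor_coeff k) N z) n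
        - taylor_coeff (\<lambda>z. \<Theta> z * k z) n)) \<longlonglongrightarrow> 0"
      by (rule tendsto_taylor_coeff_mult_series_trunc[OF holomorphic_inner_fun[OF \<Theta>] K k'])
  qed (simp_all add: H2_square_summable[OF f] seq_norm_sq_def)
  moreover have "(\<lambda>N. h2_inner f (\<lambda>z. \<Theta> z * series_trunc (taylor_coeff k) N z))
      \<longlonglongrightarrow> seq_inner (\<lambda>n. h2_inner f (\<lambda>z. \<Theta> z * z ^ n)) (taylor_coeff k)"
    unfolding h2_inner_mult_series_trunc_right[OF \<Theta> f] seq_inner_def
    by (rule summable_LIMSEQ[OF summable_seq_inner[OF
          square_summable_h2_inner_mult_inner_fun_power[OF \<Theta> f] k'(2)]])
  ultimately show ?thesis
    by (rule LIMSEQ_unique)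
qed
lemma
  assumes "g \<in> model_space \<Theta>"
  shows model_space_subset_H2: "g \<in> H2"
    and model_spaceD: "k \<in> H2 \<Longrightarrow> h2_inner g (\<lambda>z. \<Theta> z * k z) = 0"
  using assms unfolding model_space_def by auto

lemma h2_inner_mult_inner_fun_model_space:
  assumes "inner_fun \<Theta>" "g \<in> model_space \<Theta>" "k \<in> H2"
  shows "h2_inner (\<lambda>z. \<Theta> z * k z) g = 0"
  using h2_inner_commute[OF model_space_subset_H2[OF assms(2)] mult_inner_fun_in_H2[OF assms(1,3)]]
    model_spaceD[OF assms(2,3)] by simp

lemma diff_in_model_space:
  assumes "inner_fun \<Theta>" "f \<in> model_space \<Theta>" "g \<in> model_space \<Theta>"
  shows "(\<lambda>z. f z - g z) \<in> model_space \<Theta>"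
  using assms model_space_subset_H2[OF assms(2)] model_space_subset_H2[OF assms(3)]
  by (auto simp: model_space_def h2_inner_diff_left mult_inner_fun_in_H2 diff_in_H2)

lemma model_proj_eqI:
  assumes \<Theta>: "inner_fun \<Theta>" and g: "g \<in> model_space \<Theta>"
    and orth: "\<forall>k\<in>model_space \<Theta>. h2_inner (\<lambda>z. f z - g z) k = 0" and f: "f \<in> H2"
  shows "model_proj \<Theta> f = g"
  unfolding model_proj_def
proof (rule the_equality)
  show "g \<in> model_space \<Theta> \<and> (\<forall>k\<in>model_space \<Theta>. h2_inner (\<lambda>z. f z - g z) k = 0)"
    using g orth by blast
  fix g' assume g': "g' \<in> model_space \<Theta> \<and> (\<forall>k\<in>model_space \<Theta>. h2_inner (\<lambda>z. f z - g' z) k = 0)"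
  define d where "d = (\<lambda>z. g z - g' z)"
  have d: "d \<in> model_space \<Theta>" unfolding d_def using \<Theta> g g' by (intro diff_in_model_space) auto
  note H2 = model_space_subset_H2[OF g] model_space_subset_H2[OF conjunct1[OF g']]
    model_space_subset_H2[OF d]
  have "d = (\<lambda>z. (f z - g' z) - (f z - g z))" by (simp add: d_def)
  then have "h2_inner d d = h2_inner (\<lambda>z. f z - g' z) d - h2_inner (\<lambda>z. f z - g z) d"
    using H2 f by (simp add: h2_inner_diff_left diff_in_H2)
  also have "\<dots> = 0" using orth g' d by simp
  finally have "d = (\<lambda>z. 0)" by (rule H2_eq_0_if_h2_inner_self[OF H2(3)])
  then show "g' = g" by (simp add: d_def fun_eq_iff)
qed

text \<open>\<open>P\<^sub>\<Theta> f = f - \<Theta> T\<^sub>\<Theta>\<^sup>* f\<close>, and the adjoint \<open>T\<^sub>\<Theta>\<^sup>* f\<close> is the series with coefficients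
  \<open>\<langle>f, \<Theta> z\<^sup>n\<rangle>\<close>, which are square-summable by Bessel's inequality.\<close>

lemma model_proj_eq_diff_mult:
  assumes \<Theta>: "inner_fun \<Theta>" and f: "f \<in> H2"
  shows "\<exists>W\<in>H2. model_proj \<Theta> f = (\<lambda>z. f z - \<Theta> z * W z)"
proof -
  define w where "w = (\<lambda>n. h2_inner f (\<lambda>z. \<Theta> z * z ^ n))"
  have w: "square_summable w"
    unfolding w_def by (rule square_summable_h2_inner_mult_inner_fun_power[OF \<Theta> f])
  define W where "W = series_fun w"
  have W: "W \<in> H2" unfolding W_def by (rule series_fun_in_H2[OF w])
  have adjoint: "h2_inner f (\<lambda>z. \<Theta> z * k z) = h2_inner W k" if "k \<in> H2" for k
  proof -
    have "h2_inner W k = seq_inner w (taylor_coeff k)"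
      unfolding h2_inner_eq_seq_inner W_def taylor_coeff_series_fun[OF w] ..
    then show ?thesis
      unfolding h2_inner_mult_inner_fun_eq_seq_inner[OF \<Theta> f that] w_def by simp
  qed
  have \<Theta>W: "(\<lambda>z. \<Theta> z * W z) \<in> H2" by (rule mult_inner_fun_in_H2[OF \<Theta> W])
  have "model_proj \<Theta> f = (\<lambda>z. f z - \<Theta> z * W z)"
  proof (rule model_proj_eqI[OF \<Theta> _ _ f])
    show "(\<lambda>z. f z - \<Theta> z * W z) \<in> model_space \<Theta>"
      unfolding model_space_def
      using f W \<Theta>W by (auto simp: h2_inner_diff_left mult_inner_fun_in_H2[OF \<Theta>] adjoint
          h2_inner_mult_inner_fun[OF \<Theta>] H2_holomorphic H2_square_summable diff_in_H2)
    show "\<forall>k\<in>model_space \<Theta>. h2_inner (\<lambda>z. f z - (f z - \<Theta> z * W z)) k = 0"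
      by (simp add: h2_inner_mult_inner_fun_model_space[OF \<Theta> _ W])
  qed
  then show ?thesis using W by blast
qed

section \<open>Inner vectors of \<open>\<phi>(S\<^sub>\<Theta>)\<close>\<close>

lemma inner_divisor_mult_in_model_space:
  assumes \<Theta>: "\<forall>z\<in>disc. \<Theta> z = \<phi> z * I z" and \<phi>: "inner_fun \<phi>"
    and v: "inner_divisor v I" and g: "g \<in> model_space \<phi>"
  shows "(\<lambda>z. v z * g z) \<in> model_space \<Theta>"
proof -
  obtain u where u: "inner_fun u" and I: "\<And>z. z \<in> disc \<Longrightarrow> I z = v z * u z"
    using v unfolding inner_divisor_def by blast
  have v': "inner_fun v" using v unfolding inner_divisor_def by blast
  note g_H2 = model_space_subset_H2[OF g]
  have "h2_inner (\<lambda>z. v z * g z) (\<lambda>z. \<Theta> z * k z) = 0" if k: "k \<in> H2" for k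
  proof -
    define q where "q = (\<lambda>z. \<phi> z * (u z * k z))"
    have uk: "(\<lambda>z. u z * k z) \<in> H2" and q: "q \<in> H2"
      unfolding q_def by (intro mult_inner_fun_in_H2 u \<phi> k)+
    have "h2_inner (\<lambda>z. v z * g z) (\<lambda>z. \<Theta> z * k z) = h2_inner (\<lambda>z. v z * g z) (\<lambda>z. v z * q z)"
      using \<Theta> I by (intro h2_inner_cong) (simp_all add: q_def mult_ac)
    also have "\<dots> = h2_inner g q"
      by (rule h2_inner_mult_inner_fun[OF v' H2_holomorphic[OF g_H2] H2_square_summable[OF g_H2]
            H2_holomorphic[OF q] H2_square_summable[OF q]])
    also have "\<dots> = 0" unfolding q_def by (rule model_spaceD[OF g uk])
    finally show ?thesis .
  qed
  then show ?thesis
    unfolding model_space_def using mult_inner_fun_in_H2[OF v' g_H2] by blast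
qed

lemma compressed_op_power_eq:
  assumes \<Theta>: "inner_fun \<Theta>" and \<phi>: "inner_fun \<phi>" and h: "h \<in> H2"
  shows "\<exists>w\<in>H2. (compressed_op \<Theta> \<phi> ^^ n) h = (\<lambda>z. \<phi> z ^ n * h z + \<Theta> z * w z)"
proof (induction n)
  case 0
  show ?case by (rule bexI[of _ "\<lambda>z. 0"]) (simp_all add: zero_in_H2)
next
  case (Suc n)
  then obtain w where w: "w \<in> H2"
    and power_n: "(compressed_op \<Theta> \<phi> ^^ n) h = (\<lambda>z. \<phi> z ^ n * h z + \<Theta> z * w z)"
    by blast
  have "(\<lambda>z. \<phi> z * (\<phi> z ^ n * h z + \<Theta> z * w z)) \<in> H2"
    using w by (intro mult_inner_fun_in_H2 add_in_H2 power_mult_inner_fun_in_H2 \<phi> \<Theta> h)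
  then obtain W where W: "W \<in> H2" and proj:
    "compressed_op \<Theta> \<phi> (\<lambda>z. \<phi> z ^ n * h z + \<Theta> z * w z)
      = (\<lambda>z. \<phi> z * (\<phi> z ^ n * h z + \<Theta> z * w z) - \<Theta> z * W z)"
    unfolding compressed_op_def using model_proj_eq_diff_mult[OF \<Theta>] by blast
  have "(\<lambda>z. \<phi> z * w z - W z) \<in> H2" by (intro diff_in_H2 mult_inner_fun_in_H2 \<phi> w W)
  moreover have "(compressed_op \<Theta> \<phi> ^^ Suc n) h
      = (\<lambda>z. \<phi> z ^ Suc n * h z + \<Theta> z * (\<phi> z * w z - W z))"
    using power_n proj by (simp add: algebra_simps)
  ultimately show ?case by (auto intro!: bexI[of _ "\<lambda>z. \<phi> z * w z - W z"])
qed

lemma h2_inner_power_mult_model_space: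
  assumes \<phi>: "inner_fun \<phi>" and g: "g \<in> model_space \<phi>" and "n \<ge> 1"
  shows "h2_inner (\<lambda>z. \<phi> z ^ n * g z) g = 0"
proof -
  obtain m where n: "n = Suc m" using \<open>n \<ge> 1\<close> by (cases n) auto
  have "(\<lambda>z. \<phi> z ^ n * g z) = (\<lambda>z. \<phi> z * (\<phi> z ^ m * g z))" by (simp add: n mult_ac)
  then show ?thesis
    using h2_inner_mult_inner_fun_model_space[OF \<phi> g
        power_mult_inner_fun_in_H2[OF \<phi> model_space_subset_H2[OF g]]]
    by simp
qed

lemma h2_inner_compressed_op_power:
  assumes \<Theta>: "inner_fun \<Theta>" and \<phi>: "inner_fun \<phi>" and h: "h \<in> model_space \<Theta>"
  shows "h2_inner ((compressed_op \<Theta> \<phi> ^^ n) h) h = h2_inner (\<lambda>z. \<phi> z ^ n * h z) h"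
proof -
  note h_H2 = model_space_subset_H2[OF h]
  obtain w where w: "w \<in> H2"
    and power: "(compressed_op \<Theta> \<phi> ^^ n) h = (\<lambda>z. \<phi> z ^ n * h z + \<Theta> z * w z)"
    using compressed_op_power_eq[OF \<Theta> \<phi> h_H2] by blast
  have "h2_inner ((compressed_op \<Theta> \<phi> ^^ n) h) h
      = h2_inner (\<lambda>z. \<phi> z ^ n * h z) h + h2_inner (\<lambda>z. \<Theta> z * w z) h"
    unfolding power by (rule h2_inner_add_left[OF power_mult_inner_fun_in_H2[OF \<phi> h_H2]
          mult_inner_fun_in_H2[OF \<Theta> w] h_H2])
  also have "h2_inner (\<lambda>z. \<Theta> z * w z) h = 0"
    by (rule h2_inner_mult_inner_fun_model_space[OF \<Theta> h w])
  finally show ?thesis by simp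
qed

theorem theorem6p4:
  fixes \<Theta> \<phi> I :: "complex \<Rightarrow> complex"
  assumes "inner_fun \<Theta>" and "inner_fun \<phi>" and "inner_fun I"
    and "\<forall>z\<in>ball 0 1. \<Theta> z = \<phi> z * I z"
  shows "\<forall>h. (\<exists>v g. g \<in> model_space \<phi> \<and> inner_divisor v I \<and> h = (\<lambda>z. v z * g z))
            \<and> h2_inner h h = 1 \<longrightarrow>
          (\<forall>n\<ge>1. h2_inner ((compressed_op \<Theta> \<phi> ^^ n) h) h = 0)"
proof (intro allI impI)
  fix h and n :: nat
  assume "(\<exists>v g. g \<in> model_space \<phi> \<and> inner_divisor v I \<and> h = (\<lambda>z. v z * g z)) \<and> h2_inner h h = 1"
  then obtain v g where g: "g \<in> model_space \<phi>" and v: "inner_divisor v I"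
    and h: "h = (\<lambda>z. v z * g z)"
    by blast
  assume "n \<ge> 1"
  have h_K: "h \<in> model_space \<Theta>"
    unfolding h by (rule inner_divisor_mult_in_model_space[OF assms(4,2) v g])
  have v_inner: "inner_fun v" using v by (simp add: inner_divisor_def)
  note g_H2 = model_space_subset_H2[OF g]
  have "h2_inner ((compressed_op \<Theta> \<phi> ^^ n) h) h
      = h2_inner (\<lambda>z. v z * (\<phi> z ^ n * g z)) (\<lambda>z. v z * g z)"
    unfolding h2_inner_compressed_op_power[OF assms(1,2) h_K] unfolding h by (simp add: mult_ac)
  also have "\<dots> = h2_inner (\<lambda>z. \<phi> z ^ n * g z) g"
    using power_mult_inner_fun_in_H2[OF assms(2) g_H2] g_H2
    by (intro h2_inner_mult_inner_fun[OF v_inner] H2_holomorphic H2_square_summable)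
  also have "\<dots> = 0"
    by (rule h2_inner_power_mult_model_space[OF assms(2) g \<open>n \<ge> 1\<close>])
  finally show "h2_inner ((compressed_op \<Theta> \<phi> ^^ n) h) h = 0" .
qed

end
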